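(* Let $\psi$ be a formula of the positive Boolean closure $\mathcal B^+(\mathrm{HyperLTL})$. Then there exists a HyperLTL formula $\psi^*$ in prenex form that is equivalent to $\psi$ (i.e. $\llbracket\psi^*\rrbracket_T(\Pi)=\llbracket\psi\rrbracket_T(\Pi)$ for every non-empty set of traces $T$ and every trace assignment $\Pi$ defined on the free variables), such that $\alpha(\psi^* )\le\alpha(\psi)+1$ and $\psi^*$ contains the same number of existential quantifiers and the same number of universal quantifiers as $\psi$.
   Context: Fix a finite set $\mathrm{AP}$ of atomic propositions and an infinite set $\mathcal V$ of trace variables. A trace is an infinite sequence $t=t[0]t[1]\cdots$ with $t[i]\in[0,1]^{\mathrm{AP}}$; $t[i,\infty]$ is its suffix from position $i$. A trace assignment $\Pi$ is a partial map from $\mathcal V$ to traces; $\Pi[i,\infty]$ is $\pi\mapsto\Pi(\pi)[i,\infty]$, $\Pi[\pi\mapsto t]$ is $\Pi$ updated at $\pi$. $\mathcal B^+(\mathrm{HyperLTL})$ is given by the grammar $\psi::=\exists\pi\,\psi\mid\forall\pi\,\psi\mid\psi\vee\psi\mid\psi\wedge\psi\mid\phi$, $\phi::=p_\pi\mid\neg\phi\mid\phi\vee\phi\mid X\phi\mid\phi U\phi$ ($p\in\mathrm{AP}$, $\pi\in\mathcal V$). Semantics for non-empty $T$: $\llbracket p_\pi\rrbracket_T(\Pi)=\Pi(\pi)[0](p)$, $\llbracket\neg\phi\rrbracket=1-\llbracket\phi\rrbracket$, $\vee$ is $\max$, $\wedge$ is $\min$, $\llbracket X\phi\rrbracket_T(\Pi)=\llbracket\phi\rrbracket_T(\Pi[1,\infty])$,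 $\llbracket\phi_1U\phi_2\rrbracket_T(\Pi)=\sup_{i\ge0}\min\big(\llbracket\phi_2\rrbracket_T(\Pi[i,\infty]),\min_{0\le j<i}\llbracket\phi_1\rrbracket_T(\Pi[j,\infty])\big)$, $\llbracket\forall\pi\,\psi\rrbracket_T(\Pi)=\inf_{t\in T}\llbracket\psi\rrbracket_T(\Pi[\pi\mapsto t])$, $\llbracket\exists\pi\,\psi\rrbracket_T(\Pi)=\sup_{t\in T}\llbracket\psi\rrbracket_T(\Pi[\pi\mapsto t])$. HyperLTL is the fragment of formulas in prenex form: a sequence of quantifiers followed by a quantifier-free formula $\phi$. The alternation depth $\alpha(\psi)$ is the maximal number of alternations between existential and universal quantifiers (in either direction) along a branch of the syntax tree of $\psi$. *)

theory Defs
  imports Complex_Main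
begin

type_synonym 'ap trace = "nat \<Rightarrow> 'ap \<Rightarrow> real"

definition valid_trace :: "'ap trace \<Rightarrow> bool" where
  "valid_trace t \<longleftrightarrow> (\<forall>i p. 0 \<le> t i p \<and> t i p \<le> 1)"

definition suffix :: "nat \<Rightarrow> 'ap trace \<Rightarrow> 'ap trace" where
  "suffix i t = (\<lambda>n. t (n + i))"

type_synonym ('v,'ap) assignment = "'v \<Rightarrow> 'ap trace option"

definition shift_asg :: "nat \<Rightarrow> ('v,'ap) assignment \<Rightarrow> ('v,'ap) assignment" where
  "shift_asg i \<Pi> = (\<lambda>\<pi>. map_option (suffix i) (\<Pi> \<pi>))"

datatype ('v,'ap) qf =
    Prop 'ap 'v
  | Neg "('v,'ap) qf"
  | Disj "('v,'ap) qf" "('v,'ap) qf"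
  | Next "('v,'ap) qf"
  | Until "('v,'ap) qf" "('v,'ap) qf"

datatype ('v,'ap) hyp =
    Ex 'v "('v,'ap) hyp"
  | All 'v "('v,'ap) hyp"
  | HOr "('v,'ap) hyp" "('v,'ap) hyp"
  | HAnd "('v,'ap) hyp" "('v,'ap) hyp"
  | Qf "('v,'ap) qf"

text \<open>Quantitative semantics. The empty minimum (for i = 0 in Until) is 1, the top of [0,1].\<close>
fun sem_qf :: "('v,'ap) assignment \<Rightarrow> ('v,'ap) qf \<Rightarrow> real" where
  "sem_qf \<Pi> (Prop p \<pi>) = the (\<Pi> \<pi>) 0 p"
| "sem_qf \<Pi> (Neg \<phi>) = 1 - sem_qf \<Pi> \<phi>"
| "sem_qf \<Pi> (Disj \<phi> \<psi>) = max (sem_qf \<Pi> \<phi>) (sem_qf \<Pi> \<psi>)"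
| "sem_qf \<Pi> (Next \<phi>) = sem_qf (shift_asg 1 \<Pi>) \<phi>"
| "sem_qf \<Pi> (Until \<phi> \<psi>) =
     (SUP i. min (sem_qf (shift_asg i \<Pi>) \<psi>)
                 (Min (insert 1 ((\<lambda>j. sem_qf (shift_asg j \<Pi>) \<phi>) ` {..<i}))))"

fun sem :: "'ap trace set \<Rightarrow> ('v,'ap) assignment \<Rightarrow> ('v,'ap) hyp \<Rightarrow> real" where
  "sem T \<Pi> (Ex \<pi> \<psi>) = (SUP t\<in>T. sem T (\<Pi>(\<pi> \<mapsto> t)) \<psi>)"
| "sem T \<Pi> (All \<pi> \<psi>) = (INF t\<in>T. sem T (\<Pi>(\<pi> \<mapsto> t)) \<psi>)"
| "sem T \<Pi> (HOr \<psi>1 \<psi>2) = max (sem T \<Pi> \<psi>1) (sem T \<Pi> \<psi>2)"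
| "sem T \<Pi> (HAnd \<psi>1 \<psi>2) = min (sem T \<Pi> \<psi>1) (sem T \<Pi> \<psi>2)"
| "sem T \<Pi> (Qf \<phi>) = sem_qf \<Pi> \<phi>"

fun fv_qf :: "('v,'ap) qf \<Rightarrow> 'v set" where
  "fv_qf (Prop p \<pi>) = {\<pi>}"
| "fv_qf (Neg \<phi>) = fv_qf \<phi>"
| "fv_qf (Disj \<phi> \<psi>) = fv_qf \<phi> \<union> fv_qf \<psi>"
| "fv_qf (Next \<phi>) = fv_qf \<phi>"
| "fv_qf (Until \<phi> \<psi>) = fv_qf \<phi> \<union> fv_qf \<psi>"

fun fv :: "('v,'ap) hyp \<Rightarrow> 'v set" where
  "fv (Ex \<pi> \<psi>) = fv \<psi> - {\<pi>}"
| "fv (All \<pi> \<psi>) = fv \<psi> - {\<pi>}"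
| "fv (HOr \<psi>1 \<psi>2) = fv \<psi>1 \<union> fv \<psi>2"
| "fv (HAnd \<psi>1 \<psi>2) = fv \<psi>1 \<union> fv \<psi>2"
| "fv (Qf \<phi>) = fv_qf \<phi>"

text \<open>HyperLTL = prenex formulas: a quantifier prefix followed by a quantifier-free formula.\<close>
inductive prenex :: "('v,'ap) hyp \<Rightarrow> bool" where
  "prenex (Qf \<phi>)"
| "prenex \<psi> \<Longrightarrow> prenex (Ex \<pi> \<psi>)"
| "prenex \<psi> \<Longrightarrow> prenex (All \<pi> \<psi>)"

text \<open>Alternations along branches; the argument records the last quantifier seen on the
  branch (Some True = existential, Some False = universal, None = none yet).\<close>
fun alts :: "bool option \<Rightarrow> ('v,'ap) hyp \<Rightarrow> nat" where
  "alts q (Ex \<pi> \<psi>) = (if q = Some False then 1 else 0) + alts (Some True) \<psi>"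
| "alts q (All \<pi> \<psi>) = (if q = Some True then 1 else 0) + alts (Some False) \<psi>"
| "alts q (HOr \<psi>1 \<psi>2) = max (alts q \<psi>1) (alts q \<psi>2)"
| "alts q (HAnd \<psi>1 \<psi>2) = max (alts q \<psi>1) (alts q \<psi>2)"
| "alts q (Qf \<phi>) = 0"

definition alt_depth :: "('v,'ap) hyp \<Rightarrow> nat" where
  "alt_depth \<psi> = alts None \<psi>"

fun num_ex :: "('v,'ap) hyp \<Rightarrow> nat" where
  "num_ex (Ex \<pi> \<psi>) = Suc (num_ex \<psi>)"
| "num_ex (All \<pi> \<psi>) = num_ex \<psi>"
| "num_ex (HOr \<psi>1 \<psi>2) = num_ex \<psi>1 + num_ex \<psi>2"
| "num_ex (HAnd \<psi>1 \<psi>2) = num_ex \<psi>1 + num_ex \<psi>2"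
| "num_ex (Qf \<phi>) = 0"

fun num_all :: "('v,'ap) hyp \<Rightarrow> nat" where
  "num_all (Ex \<pi> \<psi>) = num_all \<psi>"
| "num_all (All \<pi> \<psi>) = Suc (num_all \<psi>)"
| "num_all (HOr \<psi>1 \<psi>2) = num_all \<psi>1 + num_all \<psi>2"
| "num_all (HAnd \<psi>1 \<psi>2) = num_all \<psi>1 + num_all \<psi>2"
| "num_all (Qf \<phi>) = 0"

end

theory Submission
  imports Defs "HOL-Combinatorics.Transposition" "HOL-Library.Multiset"
begin

text \<open>A conjunction or disjunction of two prenex formulas is brought into prenex form by renaming
  their bound variables apart and pulling the quantifiers out one at a time. This is sound because
  all values lie in [0,1] and the trace set is nonempty, so SUP and INF commute with max and min
  against a term not depending on the quantified variable. The two quantifier prefixes may be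
  interleaved arbitrarily; merging them greedily, always continuing with a quantifier of the kind
  currently in force, produces no alternation that is not already present in one of them. Counted
  relative to a preceding quantifier this gives no new alternations at all; relative to none, it
  costs at most one.\<close>

lemma cSUP_max_const:
  fixes f :: "'a \<Rightarrow> 'b::conditionally_complete_linorder"
  assumes "A \<noteq> {}" "bdd_above (f ` A)"
  shows "(SUP a\<in>A. max (f a) c) = max (SUP a\<in>A. f a) c"
  using SUP_sup_distrib[of A f "\<lambda>_. c"] assms by (simp add: sup_max image_constant_conv)

lemma cINF_min_const:
  fixes f :: "'a \<Rightarrow> 'b::conditionally_complete_linorder"
  assumes "A \<noteq> {}" "bdd_below (f ` A)"
  shows "(INF a\<in>A. min (f a) c) = min (INF a\<in>A. f a) c"
  using cINF_inf_distrib[of A f "\<lambda>_. c"] assms by (simp add: inf_min image_constant_conv)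

lemma cSUP_min_const:
  fixes f :: "'a \<Rightarrow> 'b::conditionally_complete_linorder"
  assumes "A \<noteq> {}" "bdd_above (f ` A)"
  shows "(SUP a\<in>A. min (f a) c) = min (SUP a\<in>A. f a) c"
proof (rule order.antisym)
  show "(SUP a\<in>A. min (f a) c) \<le> min (SUP a\<in>A. f a) c"
    using assms by (intro cSUP_least) (auto intro: cSUP_upper2 simp: min_le_iff_disj)
  have bdd: "bdd_above ((\<lambda>a. min (f a) c) ` A)"
    using assms(2) by (auto simp: bdd_above_def min_le_iff_disj)
  show "min (SUP a\<in>A. f a) c \<le> (SUP a\<in>A. min (f a) c)"
  proof (rule ccontr)
    assume "\<not> ?thesis"
    then have "(SUP a\<in>A. min (f a) c) < (SUP a\<in>A. f a)" "(SUP a\<in>A. min (f a) c) < c"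
      by (auto simp: not_le)
    then obtain a where "a \<in> A" "(SUP a\<in>A. min (f a) c) < min (f a) c"
      using less_cSUP_iff[OF assms] by auto
    then show False using cSUP_upper[OF _ bdd] by (meson not_le)
  qed
qed

lemma cINF_max_const:
  fixes f :: "'a \<Rightarrow> 'b::conditionally_complete_linorder"
  assumes "A \<noteq> {}" "bdd_below (f ` A)"
  shows "(INF a\<in>A. max (f a) c) = max (INF a\<in>A. f a) c"
proof (rule order.antisym)
  show "max (INF a\<in>A. f a) c \<le> (INF a\<in>A. max (f a) c)"
    using assms by (intro cINF_greatest) (auto intro: cINF_lower2 simp: le_max_iff_disj)
  have bdd: "bdd_below ((\<lambda>a. max (f a) c) ` A)"
    using assms(2) by (auto simp: bdd_below_def le_max_iff_disj)
  show "(INF a\<in>A. max (f a) c) \<le> max (INF a\<in>A. f a) c"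
  proof (rule ccontr)
    assume "\<not> ?thesis"
    then have "(INF a\<in>A. f a) < (INF a\<in>A. max (f a) c)" "c < (INF a\<in>A. max (f a) c)"
      by (auto simp: not_le)
    then obtain a where "a \<in> A" "max (f a) c < (INF a\<in>A. max (f a) c)"
      using cINF_less_iff[OF assms] by auto
    then show False using cINF_lower[OF bdd] by (meson not_le)
  qed
qed

definition quant_val :: "bool \<Rightarrow> 'a set \<Rightarrow> ('a \<Rightarrow> 'b::conditionally_complete_linorder) \<Rightarrow> 'b" where
  "quant_val q T g = (if q then (SUP t\<in>T. g t) else (INF t\<in>T. g t))"

definition conn_val :: "bool \<Rightarrow> 'b::linorder \<Rightarrow> 'b \<Rightarrow> 'b" where
  "conn_val d a b = (if d then max a b else min a b)"

lemma conn_val_commute: "conn_val d a b = conn_val d b a"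
  by (simp add: conn_val_def max.commute min.commute)

lemma quant_val_cong: "(\<And>t. t \<in> T \<Longrightarrow> f t = g t) \<Longrightarrow> quant_val q T f = quant_val q T g"
  by (simp add: quant_val_def cong: SUP_cong INF_cong)

lemma quant_val_conn_val_const:
  assumes "T \<noteq> {}" "bdd_above (g ` T)" "bdd_below (g ` T)"
  shows "quant_val q T (\<lambda>t. conn_val d (g t) c) = conn_val d (quant_val q T g) c"
  using assms
  by (simp add: quant_val_def conn_val_def cSUP_max_const cSUP_min_const cINF_max_const cINF_min_const)

lemma quant_val_bounded:
  fixes g :: "'a \<Rightarrow> 'b::conditionally_complete_linorder"
  assumes "T \<noteq> {}" "\<And>t. t \<in> T \<Longrightarrow> g t \<in> {a..b}"
  shows "quant_val q T g \<in> {a..b}"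
proof -
  have "bdd_above (g ` T)" "bdd_below (g ` T)"
    using assms(2) by (meson atLeastAtMost_iff bdd_aboveI2 bdd_belowI2)+
  then show ?thesis
    using assms by (auto simp: quant_val_def intro: cSUP_least cINF_greatest cSUP_upper2 cINF_lower2)
qed

definition valid_asg :: "'v set \<Rightarrow> ('v,'ap) assignment \<Rightarrow> bool" where
  "valid_asg A \<Pi> \<longleftrightarrow> A \<subseteq> dom \<Pi> \<and> (\<forall>t\<in>ran \<Pi>. valid_trace t)"

lemma valid_asg_mono: "valid_asg A \<Pi> \<Longrightarrow> B \<subseteq> A \<Longrightarrow> valid_asg B \<Pi>"
  by (auto simp: valid_asg_def)

lemma valid_asg_shift: "valid_asg A \<Pi> \<Longrightarrow> valid_asg A (shift_asg i \<Pi>)"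
  by (fastforce simp: valid_asg_def shift_asg_def valid_trace_def suffix_def ran_def)

lemma valid_asg_upd: "valid_asg (A - {x}) \<Pi> \<Longrightarrow> valid_trace t \<Longrightarrow> valid_asg A (\<Pi>(x \<mapsto> t))"
  by (auto simp: valid_asg_def ran_def)

lemma sem_qf_fv_cong: "(\<And>x. x \<in> fv_qf \<phi> \<Longrightarrow> \<Pi> x = \<Pi>' x) \<Longrightarrow> sem_qf \<Pi> \<phi> = sem_qf \<Pi>' \<phi>"
proof (induction \<phi> arbitrary: \<Pi> \<Pi>')
  case (Neg \<phi>)
  have "sem_qf \<Pi> \<phi> = sem_qf \<Pi>' \<phi>" by (rule Neg.IH) (simp add: Neg.prems)
  then show ?case by simp
next
  case (Disj \<phi>1 \<phi>2)
  have "sem_qf \<Pi> \<phi>1 = sem_qf \<Pi>' \<phi>1" "sem_qf \<Pi> \<phi>2 = sem_qf \<Pi>' \<phi>2"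
    by (rule Disj.IH; use Disj.prems in simp)+
  then show ?case by simp
next
  case (Next \<phi>)
  have "sem_qf (shift_asg 1 \<Pi>) \<phi> = sem_qf (shift_asg 1 \<Pi>') \<phi>"
    by (rule Next.IH) (simp add: Next.prems shift_asg_def)
  then show ?case by simp
next
  case (Until \<phi>1 \<phi>2)
  have "sem_qf (shift_asg i \<Pi>) \<phi>1 = sem_qf (shift_asg i \<Pi>') \<phi>1"
    "sem_qf (shift_asg i \<Pi>) \<phi>2 = sem_qf (shift_asg i \<Pi>') \<phi>2" for i
    by (rule Until.IH; simp add: Until.prems shift_asg_def)+
  then show ?case by simp
qed simp_all

lemma sem_fv_cong: "(\<And>x. x \<in> fv \<psi> \<Longrightarrow> \<Pi> x = \<Pi>' x) \<Longrightarrow> sem T \<Pi> \<psi> = sem T \<Pi>' \<psi>"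
proof (induction \<psi> arbitrary: \<Pi> \<Pi>')
  case (Ex x \<psi>)
  have "sem T (\<Pi>(x \<mapsto> t)) \<psi> = sem T (\<Pi>'(x \<mapsto> t)) \<psi>" for t
    by (rule Ex.IH) (simp add: Ex.prems)
  then show ?case by simp
next
  case (All x \<psi>)
  have "sem T (\<Pi>(x \<mapsto> t)) \<psi> = sem T (\<Pi>'(x \<mapsto> t)) \<psi>" for t
    by (rule All.IH) (simp add: All.prems)
  then show ?case by simp
next
  case (HOr \<psi>1 \<psi>2)
  have "sem T \<Pi> \<psi>1 = sem T \<Pi>' \<psi>1" "sem T \<Pi> \<psi>2 = sem T \<Pi>' \<psi>2"
    by (rule HOr.IH; use HOr.prems in simp)+
  then show ?case by simp
next
  case (HAnd \<psi>1 \<psi>2)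
  have "sem T \<Pi> \<psi>1 = sem T \<Pi>' \<psi>1" "sem T \<Pi> \<psi>2 = sem T \<Pi>' \<psi>2"
    by (rule HAnd.IH; use HAnd.prems in simp)+
  then show ?case by simp
qed (auto intro: sem_qf_fv_cong)

lemma sem_qf_bounded: "valid_asg (fv_qf \<phi>) \<Pi> \<Longrightarrow> sem_qf \<Pi> \<phi> \<in> {0..1}"
proof (induction \<phi> arbitrary: \<Pi>)
  case (Prop p x)
  then show ?case by (auto simp: valid_asg_def valid_trace_def ran_def)
next
  case (Disj \<phi>1 \<phi>2)
  then show ?case by (auto simp: max_def intro: valid_asg_mono)
next
  case (Next \<phi>)
  then show ?case by (simp add: valid_asg_shift)
next
  case (Until \<phi>1 \<phi>2)
  have "sem_qf (shift_asg i \<Pi>) \<phi>1 \<in> {0..1}" "sem_qf (shift_asg i \<Pi>) \<phi>2 \<in> {0..1}" for i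
    using Until by (auto intro: valid_asg_shift valid_asg_mono)
  then have "quant_val True UNIV (\<lambda>i. min (sem_qf (shift_asg i \<Pi>) \<phi>2)
      (Min (insert 1 ((\<lambda>j. sem_qf (shift_asg j \<Pi>) \<phi>1) ` {..<i})))) \<in> {0..1}"
    by (intro quant_val_bounded) (auto simp: min_le_iff_disj)
  then show ?case by (simp add: quant_val_def)
qed simp

lemma sem_bounded:
  assumes "T \<noteq> {}" "\<forall>t\<in>T. valid_trace t"
  shows "valid_asg (fv \<psi>) \<Pi> \<Longrightarrow> sem T \<Pi> \<psi> \<in> {0..1}"
proof (induction \<psi> arbitrary: \<Pi>)
  case (Ex x \<psi>)
  then have "quant_val True T (\<lambda>t. sem T (\<Pi>(x \<mapsto> t)) \<psi>) \<in> {0..1}"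
    using assms by (intro quant_val_bounded) (auto intro: valid_asg_upd)
  then show ?case by (simp add: quant_val_def)
next
  case (All x \<psi>)
  then have "quant_val False T (\<lambda>t. sem T (\<Pi>(x \<mapsto> t)) \<psi>) \<in> {0..1}"
    using assms by (intro quant_val_bounded) (auto intro: valid_asg_upd)
  then show ?case by (simp add: quant_val_def)
qed (auto simp: max_def min_def intro: valid_asg_mono dest: sem_qf_bounded)

lemma finite_fv_qf: "finite (fv_qf \<phi>)"
  by (induction \<phi>) simp_all

lemma finite_fv: "finite (fv \<psi>)"
  by (induction \<psi>) (simp_all add: finite_fv_qf)

definition quant :: "bool \<Rightarrow> 'v \<Rightarrow> ('v,'ap) hyp \<Rightarrow> ('v,'ap) hyp" where
  "quant q x \<psi> = (if q then Ex x \<psi> else All x \<psi>)"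

lemma sem_quant: "sem T \<Pi> (quant q x \<psi>) = quant_val q T (\<lambda>t. sem T (\<Pi>(x \<mapsto> t)) \<psi>)"
  by (simp add: quant_def quant_val_def)

lemma fv_quant [simp]: "fv (quant q x \<psi>) = fv \<psi> - {x}"
  by (simp add: quant_def)

lemma alts_quant [simp]: "alts (Some b) (quant q x \<psi>) = (if q = b then 0 else 1) + alts (Some q) \<psi>"
  by (auto simp: quant_def)

lemma num_ex_quant [simp]: "num_ex (quant q x \<psi>) = (if q then 1 else 0) + num_ex \<psi>"
  by (simp add: quant_def)

lemma num_all_quant [simp]: "num_all (quant q x \<psi>) = (if q then 0 else 1) + num_all \<psi>"
  by (simp add: quant_def)

lemma prenex_quant: "prenex \<psi> \<Longrightarrow> prenex (quant q x \<psi>)"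
  by (simp add: quant_def prenex.intros)

lemma map_hyp_quant: "map_hyp f g (quant q x \<psi>) = quant q (f x) (map_hyp f g \<psi>)"
  by (simp add: quant_def)

lemma shift_asg_comp: "shift_asg i (\<Pi> \<circ> f) = shift_asg i \<Pi> \<circ> f"
  by (auto simp: shift_asg_def)

lemma sem_qf_map_qf: "sem_qf \<Pi> (map_qf f id \<phi>) = sem_qf (\<Pi> \<circ> f) \<phi>"
  by (induction \<phi> arbitrary: \<Pi>) (simp_all add: shift_asg_comp)

lemma fv_qf_map_qf: "fv_qf (map_qf f g \<phi>) = f ` fv_qf \<phi>"
  by (induction \<phi>) auto

lemma sem_map_hyp: "inj f \<Longrightarrow> sem T \<Pi> (map_hyp f id \<psi>) = sem T (\<Pi> \<circ> f) \<psi>"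
proof (induction \<psi> arbitrary: \<Pi>)
  case (Ex x \<psi>)
  have "\<Pi>(f x \<mapsto> t) \<circ> f = (\<Pi> \<circ> f)(x \<mapsto> t)" for t
    using \<open>inj f\<close> by (auto simp: fun_eq_iff inj_eq)
  then have "sem T (\<Pi>(f x \<mapsto> t)) (map_hyp f id \<psi>) = sem T ((\<Pi> \<circ> f)(x \<mapsto> t)) \<psi>" for t
    by (simp only: Ex.IH[OF Ex.prems])
  then show ?case by (simp add: id_def comp_def)
next
  case (All x \<psi>)
  have "\<Pi>(f x \<mapsto> t) \<circ> f = (\<Pi> \<circ> f)(x \<mapsto> t)" for t
    using \<open>inj f\<close> by (auto simp: fun_eq_iff inj_eq)
  then have "sem T (\<Pi>(f x \<mapsto> t)) (map_hyp f id \<psi>) = sem T ((\<Pi> \<circ> f)(x \<mapsto> t)) \<psi>" for t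
    by (simp only: All.IH[OF All.prems])
  then show ?case by (simp add: id_def comp_def)
qed (simp_all add: sem_qf_map_qf)

lemma fv_map_hyp: "inj f \<Longrightarrow> fv (map_hyp f g \<psi>) = f ` fv \<psi>"
  by (induction \<psi>) (auto simp: fv_qf_map_qf image_Un image_set_diff)

lemma
  assumes "z \<notin> fv \<psi>"
  shows sem_alpha: "sem T \<Pi> (quant q z (map_hyp (transpose x z) id \<psi>)) = sem T \<Pi> (quant q x \<psi>)"
    and fv_alpha: "fv (quant q z (map_hyp (transpose x z) id \<psi>)) = fv (quant q x \<psi>)"
proof -
  have "sem T ((\<Pi>(z \<mapsto> t)) \<circ> transpose x z) \<psi> = sem T (\<Pi>(x \<mapsto> t)) \<psi>" for t
    using assms by (intro sem_fv_cong) (auto simp: transpose_def)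
  then show "sem T \<Pi> (quant q z (map_hyp (transpose x z) id \<psi>)) = sem T \<Pi> (quant q x \<psi>)"
    by (simp add: sem_quant sem_map_hyp)
  show "fv (quant q z (map_hyp (transpose x z) id \<psi>)) = fv (quant q x \<psi>)"
    using assms by (auto simp: fv_map_hyp transpose_def)
qed

fun prefixed :: "(bool \<times> 'v) list \<Rightarrow> ('v,'ap) qf \<Rightarrow> ('v,'ap) hyp" where
  "prefixed [] \<phi> = Qf \<phi>"
| "prefixed ((q, x) # p) \<phi> = quant q x (prefixed p \<phi>)"

fun prefix_alts :: "bool \<Rightarrow> bool list \<Rightarrow> nat" where
  "prefix_alts b [] = 0"
| "prefix_alts b (q # qs) = (if q = b then 0 else 1) + prefix_alts q qs"

lemma prenex_prefixed: "prenex (prefixed p \<phi>)"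
  by (induction p \<phi> rule: prefixed.induct) (simp_all add: prenex.intros prenex_quant)

lemma fv_prefixed: "fv (prefixed p \<phi>) = fv_qf \<phi> - snd ` set p"
  by (induction p \<phi> rule: prefixed.induct) auto

lemma alts_prefixed: "alts (Some b) (prefixed p \<phi>) = prefix_alts b (map fst p)"
  by (induction p \<phi> arbitrary: b rule: prefixed.induct) simp_all

lemma num_ex_prefixed: "num_ex (prefixed p \<phi>) = count (mset (map fst p)) True"
  by (induction p \<phi> rule: prefixed.induct) simp_all

lemma num_all_prefixed: "num_all (prefixed p \<phi>) = count (mset (map fst p)) False"
  by (induction p \<phi> rule: prefixed.induct) simp_all

lemma map_hyp_prefixed: "map_hyp f g (prefixed p \<phi>) = prefixed (map (apsnd f) p) (map_qf f g \<phi>)"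
  by (induction p \<phi> rule: prefixed.induct) (simp_all add: map_hyp_quant)

text \<open>The outermost bound variable \<open>x\<close> is renamed to a fresh \<open>z\<close> by the transposition of \<open>x\<close>
  and \<open>z\<close>, which fixes the inner bound variables already renamed away from \<open>x\<close>.\<close>

lemma fresh_prefix:
  fixes p :: "(bool \<times> 'v) list" and \<phi> :: "('v,'ap) qf"
  assumes "infinite (UNIV :: 'v set)"
  shows "finite F \<Longrightarrow> \<exists>p' \<phi>'. map fst p' = map fst p \<and> fv (prefixed p' \<phi>') = fv (prefixed p \<phi>)
    \<and> snd ` set p' \<inter> F = {} \<and> (\<forall>T \<Pi>. sem T \<Pi> (prefixed p' \<phi>') = sem T \<Pi> (prefixed p \<phi>))"
proof (induction p arbitrary: F)
  case Nil
  show ?case by (intro exI[of _ "[]"] exI[of _ \<phi>]) simp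
next
  case (Cons a p)
  obtain q x where a: "a = (q, x)" by fastforce
  from Cons.IH[of "insert x F"] Cons.prems obtain p' \<phi>' where p':
    "map fst p' = map fst p" "fv (prefixed p' \<phi>') = fv (prefixed p \<phi>)"
    "snd ` set p' \<inter> insert x F = {}" "\<forall>T \<Pi>. sem T \<Pi> (prefixed p' \<phi>') = sem T \<Pi> (prefixed p \<phi>)"
    by blast
  have "finite (insert x F \<union> fv (prefixed p \<phi>) \<union> snd ` set p')"
    using Cons.prems finite_fv_qf[of \<phi>] unfolding fv_prefixed by blast
  then obtain z where z: "z \<notin> insert x F \<union> fv (prefixed p \<phi>) \<union> snd ` set p'"
    using ex_new_if_finite[OF assms] by meson
  define \<tau> where "\<tau> = transpose x z"
  have renamed: "prefixed ((q, z) # map (apsnd \<tau>) p') (map_qf \<tau> id \<phi>')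
      = quant q z (map_hyp \<tau> id (prefixed p' \<phi>'))"
    by (simp add: map_hyp_prefixed)
  have z_fresh: "z \<notin> fv (prefixed p' \<phi>')"
    using z p'(2) by blast
  have "\<tau> ` snd ` set p' = snd ` set p'"
    using p'(3) z by (auto simp: \<tau>_def transpose_def image_iff)
  then have bound: "snd ` set ((q, z) # map (apsnd \<tau>) p') = insert z (snd ` set p')"
    by (simp add: image_image)
  show ?case
  proof (intro exI conjI allI)
    show "map fst ((q, z) # map (apsnd \<tau>) p') = map fst (a # p)"
      using p'(1) a by (simp add: comp_def)
    show "fv (prefixed ((q, z) # map (apsnd \<tau>) p') (map_qf \<tau> id \<phi>')) = fv (prefixed (a # p) \<phi>)"
      unfolding renamed unfolding \<tau>_def fv_alpha[OF z_fresh] using p'(2) a by simp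
    show "snd ` set ((q, z) # map (apsnd \<tau>) p') \<inter> F = {}"
      unfolding bound using p'(3) z by blast
    fix T \<Pi>
    show "sem T \<Pi> (prefixed ((q, z) # map (apsnd \<tau>) p') (map_qf \<tau> id \<phi>')) = sem T \<Pi> (prefixed (a # p) \<phi>)"
      unfolding renamed unfolding \<tau>_def sem_alpha[OF z_fresh] using p'(4) a by (simp add: sem_quant)
  qed
qed

definition qf_conn :: "bool \<Rightarrow> ('v,'ap) qf \<Rightarrow> ('v,'ap) qf \<Rightarrow> ('v,'ap) qf" where
  "qf_conn d \<phi>1 \<phi>2 = (if d then Disj \<phi>1 \<phi>2 else Neg (Disj (Neg \<phi>1) (Neg \<phi>2)))"

lemma sem_qf_conn: "sem_qf \<Pi> (qf_conn d \<phi>1 \<phi>2) = conn_val d (sem_qf \<Pi> \<phi>1) (sem_qf \<Pi> \<phi>2)"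
  by (auto simp: qf_conn_def conn_val_def max_def min_def)

lemma fv_qf_conn [simp]: "fv_qf (qf_conn d \<phi>1 \<phi>2) = fv_qf \<phi>1 \<union> fv_qf \<phi>2"
  by (simp add: qf_conn_def)

text \<open>Validity of the traces is used only to bound the family being quantified over: the
  SUP or INF of an unbounded set of reals is an unspecified value.\<close>

lemma sem_quant_conn:
  assumes "T \<noteq> {}" "\<forall>t\<in>T. valid_trace t" "valid_asg (fv (quant q x \<psi>)) \<Pi>" "x \<notin> fv \<chi>"
    and "\<And>t. t \<in> T \<Longrightarrow> sem T (\<Pi>(x \<mapsto> t)) \<psi>' = conn_val d (sem T (\<Pi>(x \<mapsto> t)) \<psi>) (sem T (\<Pi>(x \<mapsto> t)) \<chi>)"
  shows "sem T \<Pi> (quant q x \<psi>') = conn_val d (sem T \<Pi> (quant q x \<psi>)) (sem T \<Pi> \<chi>)"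
proof -
  have "sem T (\<Pi>(x \<mapsto> t)) \<psi> \<in> {0..1}" if "t \<in> T" for t
    using assms(1-3) that by (intro sem_bounded) (auto intro: valid_asg_upd)
  then have bdd: "bdd_above ((\<lambda>t. sem T (\<Pi>(x \<mapsto> t)) \<psi>) ` T)" "bdd_below ((\<lambda>t. sem T (\<Pi>(x \<mapsto> t)) \<psi>) ` T)"
    by (meson atLeastAtMost_iff bdd_aboveI2 bdd_belowI2)+
  have "sem T (\<Pi>(x \<mapsto> t)) \<chi> = sem T \<Pi> \<chi>" for t
    using assms(4) by (intro sem_fv_cong) auto
  then have "sem T \<Pi> (quant q x \<psi>') = quant_val q T (\<lambda>t. conn_val d (sem T (\<Pi>(x \<mapsto> t)) \<psi>) (sem T \<Pi> \<chi>))"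
    unfolding sem_quant using assms(5) by (intro quant_val_cong) simp
  also have "\<dots> = conn_val d (sem T \<Pi> (quant q x \<psi>)) (sem T \<Pi> \<chi>)"
    unfolding sem_quant using assms(1) bdd by (rule quant_val_conn_val_const)
  finally show ?thesis .
qed

lemma sem_prefixed_shuffle:
  assumes "T \<noteq> {}" "\<forall>t\<in>T. valid_trace t"
  shows "p \<in> shuffles p1 p2 \<Longrightarrow> snd ` set p1 \<inter> fv_qf \<phi>2 = {} \<Longrightarrow> snd ` set p2 \<inter> fv_qf \<phi>1 = {}
    \<Longrightarrow> valid_asg (fv (prefixed p1 \<phi>1) \<union> fv (prefixed p2 \<phi>2)) \<Pi>
    \<Longrightarrow> sem T \<Pi> (prefixed p (qf_conn d \<phi>1 \<phi>2))
        = conn_val d (sem T \<Pi> (prefixed p1 \<phi>1)) (sem T \<Pi> (prefixed p2 \<phi>2))"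
proof (induction p arbitrary: p1 p2 \<Pi>)
  case Nil
  then show ?case by (simp add: sem_qf_conn)
next
  case (Cons a p)
  obtain q x where a: "a = (q, x)" by fastforce
  have valid_upd: "valid_asg A (\<Pi>(x \<mapsto> t))"
    if "valid_asg C \<Pi>" "A - {x} \<subseteq> C" "t \<in> T" for A C t
    using that assms(2) by (intro valid_asg_upd) (auto elim: valid_asg_mono)
  from Cons.prems(1) consider
      (left) p1' where "p1 = a # p1'" "p \<in> shuffles p1' p2"
    | (right) p2' where "p2 = a # p2'" "p \<in> shuffles p1 p2'"
    by (auto simp: Cons_in_shuffles_iff neq_Nil_conv)
  then show ?case
  proof cases
    case left
    have "x \<notin> fv (prefixed p2 \<phi>2)"
      using Cons.prems(2) left a by (auto simp: fv_prefixed)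
    then have "sem T \<Pi> (quant q x (prefixed p (qf_conn d \<phi>1 \<phi>2)))
        = conn_val d (sem T \<Pi> (quant q x (prefixed p1' \<phi>1))) (sem T \<Pi> (prefixed p2 \<phi>2))"
      using Cons.prems left a
      by (intro sem_quant_conn[OF assms] Cons.IH valid_upd[OF Cons.prems(4)])
        (auto intro: valid_asg_mono[OF Cons.prems(4)])
    then show ?thesis using left a by simp
  next
    case right
    have "x \<notin> fv (prefixed p1 \<phi>1)"
      using Cons.prems(3) right a by (auto simp: fv_prefixed)
    then have "sem T \<Pi> (quant q x (prefixed p (qf_conn d \<phi>1 \<phi>2)))
        = conn_val d (sem T \<Pi> (quant q x (prefixed p2' \<phi>2))) (sem T \<Pi> (prefixed p1 \<phi>1))"
      using Cons.prems right a
      by (intro sem_quant_conn[OF assms])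
        (auto simp: conn_val_commute intro!: Cons.IH valid_upd[OF Cons.prems(4)]
          intro: valid_asg_mono[OF Cons.prems(4)])
    then show ?thesis using right a by (simp add: conn_val_commute)
  qed
qed

fun merge_prefix :: "bool \<Rightarrow> (bool \<times> 'a) list \<Rightarrow> (bool \<times> 'a) list \<Rightarrow> (bool \<times> 'a) list" where
  "merge_prefix b [] p2 = p2"
| "merge_prefix b p1 [] = p1"
| "merge_prefix b (a # p1) (c # p2) =
    (if fst a = b then a # merge_prefix b p1 (c # p2)
     else if fst c = b then c # merge_prefix b (a # p1) p2
     else a # merge_prefix (fst a) p1 (c # p2))"

lemma merge_prefix_in_shuffles: "merge_prefix b p1 p2 \<in> shuffles p1 p2"
  by (induction b p1 p2 rule: merge_prefix.induct)
    (auto intro: Cons_in_shuffles_leftI Cons_in_shuffles_rightI)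

lemma prefix_alts_merge_prefix:
  "prefix_alts b (map fst (merge_prefix b p1 p2))
     \<le> max (prefix_alts b (map fst p1)) (prefix_alts b (map fst p2))"
  by (induction b p1 p2 rule: merge_prefix.induct) auto

definition hconn :: "bool \<Rightarrow> ('v,'ap) hyp \<Rightarrow> ('v,'ap) hyp \<Rightarrow> ('v,'ap) hyp" where
  "hconn d \<psi>1 \<psi>2 = (if d then HOr \<psi>1 \<psi>2 else HAnd \<psi>1 \<psi>2)"

lemma sem_hconn: "sem T \<Pi> (hconn d \<psi>1 \<psi>2) = conn_val d (sem T \<Pi> \<psi>1) (sem T \<Pi> \<psi>2)"
  by (simp add: hconn_def conn_val_def)

lemma hconn_simps [simp]:
  "fv (hconn d \<psi>1 \<psi>2) = fv \<psi>1 \<union> fv \<psi>2"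
  "alts q (hconn d \<psi>1 \<psi>2) = max (alts q \<psi>1) (alts q \<psi>2)"
  "num_ex (hconn d \<psi>1 \<psi>2) = num_ex \<psi>1 + num_ex \<psi>2"
  "num_all (hconn d \<psi>1 \<psi>2) = num_all \<psi>1 + num_all \<psi>2"
  by (simp_all add: hconn_def)

text \<open>Alternations are counted on both sides as if a quantifier of kind \<open>b\<close> preceded the
  formula; fixing this kind is what makes the bound compositional under \<open>merge_prefix\<close>.\<close>

definition prenex_form :: "bool \<Rightarrow> ('v,'ap) hyp \<Rightarrow> (bool \<times> 'v) list \<Rightarrow> ('v,'ap) qf \<Rightarrow> bool" where
  "prenex_form b \<psi> p \<phi> \<longleftrightarrow> fv (prefixed p \<phi>) \<subseteq> fv \<psi>
     \<and> (\<forall>T \<Pi>. T \<noteq> {} \<and> (\<forall>t\<in>T. valid_trace t) \<and> valid_asg (fv \<psi>) \<Pi>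
          \<longrightarrow> sem T \<Pi> (prefixed p \<phi>) = sem T \<Pi> \<psi>)
     \<and> prefix_alts b (map fst p) \<le> alts (Some b) \<psi>
     \<and> num_ex (prefixed p \<phi>) = num_ex \<psi> \<and> num_all (prefixed p \<phi>) = num_all \<psi>"

lemma
  assumes "prenex_form b \<psi> p \<phi>"
  shows prenex_form_fv: "fv (prefixed p \<phi>) \<subseteq> fv \<psi>"
    and prenex_form_sem: "\<lbrakk>T \<noteq> {}; \<forall>t\<in>T. valid_trace t; valid_asg (fv \<psi>) \<Pi>\<rbrakk>
      \<Longrightarrow> sem T \<Pi> (prefixed p \<phi>) = sem T \<Pi> \<psi>"
    and prenex_form_alts: "prefix_alts b (map fst p) \<le> alts (Some b) \<psi>"
    and prenex_form_num_ex: "count (mset (map fst p)) True = num_ex \<psi>"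
    and prenex_form_num_all: "count (mset (map fst p)) False = num_all \<psi>"
  using assms by (simp_all add: prenex_form_def num_ex_prefixed num_all_prefixed)

lemma prenex_form_Qf: "prenex_form b (Qf \<phi>) [] \<phi>"
  by (simp add: prenex_form_def)

lemma prenex_form_quant:
  fixes \<psi> :: "('v,'ap) hyp"
  assumes "prenex_form q \<psi> p \<phi>"
  shows "prenex_form b (quant q x \<psi>) ((q, x) # p) \<phi>"
  unfolding prenex_form_def
proof (intro conjI allI impI)
  fix T :: "'ap trace set" and \<Pi> :: "('v,'ap) assignment"
  assume H: "T \<noteq> {} \<and> (\<forall>t\<in>T. valid_trace t) \<and> valid_asg (fv (quant q x \<psi>)) \<Pi>"
  then have "sem T (\<Pi>(x \<mapsto> t)) (prefixed p \<phi>) = sem T (\<Pi>(x \<mapsto> t)) \<psi>" if "t \<in> T" for t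
    using that by (intro prenex_form_sem[OF assms] valid_asg_upd) auto
  then show "sem T \<Pi> (prefixed ((q, x) # p) \<phi>) = sem T \<Pi> (quant q x \<psi>)"
    by (simp add: sem_quant cong: quant_val_cong)
qed (use prenex_form_fv[OF assms] prenex_form_alts[OF assms] prenex_form_num_ex[OF assms]
       prenex_form_num_all[OF assms] in \<open>auto simp: num_ex_prefixed num_all_prefixed\<close>)

lemma prenex_form_fresh:
  fixes \<psi> :: "('v,'ap) hyp" and F :: "'v set"
  assumes "infinite (UNIV :: 'v set)" "finite F" "prenex_form b \<psi> p \<phi>"
  obtains p' \<phi>' where "prenex_form b \<psi> p' \<phi>'" "snd ` set p' \<inter> F = {}"
proof -
  obtain p' \<phi>' where "map fst p' = map fst p" "fv (prefixed p' \<phi>') = fv (prefixed p \<phi>)"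
    "snd ` set p' \<inter> F = {}" "\<forall>T \<Pi>. sem T \<Pi> (prefixed p' \<phi>') = sem T \<Pi> (prefixed p \<phi>)"
    using fresh_prefix[OF assms(1,2)] by blast
  with assms(3) show ?thesis
    by (intro that[of p' \<phi>']) (simp_all add: prenex_form_def num_ex_prefixed num_all_prefixed)
qed

lemma prenex_form_merge:
  fixes \<psi>1 \<psi>2 :: "('v,'ap) hyp"
  assumes pf: "prenex_form b \<psi>1 p1 \<phi>1" "prenex_form b \<psi>2 p2 \<phi>2"
    and disjoint: "snd ` set p1 \<inter> fv_qf \<phi>2 = {}" "snd ` set p2 \<inter> fv_qf \<phi>1 = {}"
  shows "prenex_form b (hconn d \<psi>1 \<psi>2) (merge_prefix b p1 p2) (qf_conn d \<phi>1 \<phi>2)"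
proof -
  have shuffle: "merge_prefix b p1 p2 \<in> shuffles p1 p2"
    by (rule merge_prefix_in_shuffles)
  show ?thesis
    unfolding prenex_form_def
  proof (intro conjI allI impI)
    show "fv (prefixed (merge_prefix b p1 p2) (qf_conn d \<phi>1 \<phi>2)) \<subseteq> fv (hconn d \<psi>1 \<psi>2)"
      using prenex_form_fv[OF pf(1)] prenex_form_fv[OF pf(2)] set_shuffles[OF shuffle]
      by (auto simp: fv_prefixed)
  next
    fix T :: "'ap trace set" and \<Pi> :: "('v,'ap) assignment"
    assume H: "T \<noteq> {} \<and> (\<forall>t\<in>T. valid_trace t) \<and> valid_asg (fv (hconn d \<psi>1 \<psi>2)) \<Pi>"
    then have valid: "valid_asg (fv \<psi>1) \<Pi>" "valid_asg (fv \<psi>2) \<Pi>"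
      by (simp_all add: valid_asg_def)
    have "fv (prefixed p1 \<phi>1) \<union> fv (prefixed p2 \<phi>2) \<subseteq> fv (hconn d \<psi>1 \<psi>2)"
      using prenex_form_fv[OF pf(1)] prenex_form_fv[OF pf(2)] by auto
    with H have "valid_asg (fv (prefixed p1 \<phi>1) \<union> fv (prefixed p2 \<phi>2)) \<Pi>"
      by (meson valid_asg_mono)
    then have "sem T \<Pi> (prefixed (merge_prefix b p1 p2) (qf_conn d \<phi>1 \<phi>2))
        = conn_val d (sem T \<Pi> (prefixed p1 \<phi>1)) (sem T \<Pi> (prefixed p2 \<phi>2))"
      using H by (intro sem_prefixed_shuffle[OF _ _ shuffle disjoint]) auto
    also have "\<dots> = sem T \<Pi> (hconn d \<psi>1 \<psi>2)"
      using H prenex_form_sem[OF pf(1) _ _ valid(1)] prenex_form_sem[OF pf(2) _ _ valid(2)]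
      by (simp add: sem_hconn)
    finally show "sem T \<Pi> (prefixed (merge_prefix b p1 p2) (qf_conn d \<phi>1 \<phi>2))
        = sem T \<Pi> (hconn d \<psi>1 \<psi>2)" .
  next
    show "prefix_alts b (map fst (merge_prefix b p1 p2)) \<le> alts (Some b) (hconn d \<psi>1 \<psi>2)"
      using prenex_form_alts[OF pf(1)] prenex_form_alts[OF pf(2)] prefix_alts_merge_prefix[of b p1 p2]
      by simp
  qed (use prenex_form_num_ex[OF pf(1)] prenex_form_num_ex[OF pf(2)] prenex_form_num_all[OF pf(1)]
         prenex_form_num_all[OF pf(2)] mset_shuffles[OF shuffle] in
       \<open>simp_all add: num_ex_prefixed num_all_prefixed\<close>)
qed

lemma prenex_form_hconn:
  fixes \<psi>1 \<psi>2 :: "('v,'ap) hyp"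
  assumes "infinite (UNIV :: 'v set)" "prenex_form b \<psi>1 p1 \<phi>1" "prenex_form b \<psi>2 p2 \<phi>2"
  shows "\<exists>p \<phi>. prenex_form b (hconn d \<psi>1 \<psi>2) p \<phi>"
proof -
  obtain p1' \<phi>1' where 1: "prenex_form b \<psi>1 p1' \<phi>1'" "snd ` set p1' \<inter> fv \<psi>2 = {}"
    using prenex_form_fresh[OF assms(1) finite_fv assms(2)] .
  have "finite (fv \<psi>1 \<union> snd ` set p1')"
    by (simp add: finite_fv)
  from prenex_form_fresh[OF assms(1) this assms(3)] obtain p2' \<phi>2'
    where 2: "prenex_form b \<psi>2 p2' \<phi>2'" "snd ` set p2' \<inter> (fv \<psi>1 \<union> snd ` set p1') = {}" .
  have "fv_qf \<phi>1' \<subseteq> fv \<psi>1 \<union> snd ` set p1'" "fv_qf \<phi>2' \<subseteq> fv \<psi>2 \<union> snd ` set p2'"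
    using prenex_form_fv[OF 1(1)] prenex_form_fv[OF 2(1)] by (auto simp: fv_prefixed)
  then have "snd ` set p1' \<inter> fv_qf \<phi>2' = {}" "snd ` set p2' \<inter> fv_qf \<phi>1' = {}"
    using 1(2) 2(2) by blast+
  then show ?thesis
    using prenex_form_merge[OF 1(1) 2(1)] by blast
qed

lemma ex_prenex_form:
  fixes \<psi> :: "('v,'ap) hyp"
  assumes "infinite (UNIV :: 'v set)"
  shows "\<exists>p \<phi>. prenex_form b \<psi> p \<phi>"
proof (induction \<psi> arbitrary: b)
  case (Ex x \<psi>)
  then obtain p \<phi> where "prenex_form True \<psi> p \<phi>" by blast
  then have "prenex_form b (quant True x \<psi>) ((True, x) # p) \<phi>" by (rule prenex_form_quant)
  then show ?case by (auto simp: quant_def)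
next
  case (All x \<psi>)
  then obtain p \<phi> where "prenex_form False \<psi> p \<phi>" by blast
  then have "prenex_form b (quant False x \<psi>) ((False, x) # p) \<phi>" by (rule prenex_form_quant)
  then show ?case by (auto simp: quant_def)
next
  case (HOr \<psi>1 \<psi>2)
  obtain p1 \<phi>1 p2 \<phi>2 where "prenex_form b \<psi>1 p1 \<phi>1" "prenex_form b \<psi>2 p2 \<phi>2"
    using HOr.IH by blast
  then have "\<exists>p \<phi>. prenex_form b (hconn True \<psi>1 \<psi>2) p \<phi>" by (rule prenex_form_hconn[OF assms])
  then show ?case by (simp add: hconn_def)
next
  case (HAnd \<psi>1 \<psi>2)
  obtain p1 \<phi>1 p2 \<phi>2 where "prenex_form b \<psi>1 p1 \<phi>1" "prenex_form b \<psi>2 p2 \<phi>2"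
    using HAnd.IH by blast
  then have "\<exists>p \<phi>. prenex_form b (hconn False \<psi>1 \<psi>2) p \<phi>" by (rule prenex_form_hconn[OF assms])
  then show ?case by (simp add: hconn_def)
next
  case (Qf \<phi>)
  then show ?case using prenex_form_Qf by blast
qed

lemma alts_None_le: "alts None \<psi> \<le> alts (Some q) \<psi>"
  by (induction \<psi>) auto

lemma alts_Some_le: "alts (Some q) \<psi> \<le> alts None \<psi> + 1"
  by (induction \<psi>) auto

theorem mainTheorem5:
  fixes \<psi> :: "('v, 'ap::finite) hyp"
  assumes "infinite (UNIV :: 'v set)"
  shows "\<exists>\<psi>'. prenex \<psi>'
    \<and> (\<forall>(T :: 'ap trace set) (\<Pi> :: ('v,'ap) assignment).
          T \<noteq> {} \<and> (\<forall>t\<in>T. valid_trace t) \<and> fv \<psi> \<subseteq> dom \<Pi> \<and> (\<forall>t\<in>ran \<Pi>. valid_trace t)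
          \<longrightarrow> sem T \<Pi> \<psi>' = sem T \<Pi> \<psi>)
    \<and> alt_depth \<psi>' \<le> alt_depth \<psi> + 1
    \<and> num_ex \<psi>' = num_ex \<psi> \<and> num_all \<psi>' = num_all \<psi>"
proof -
  obtain p \<phi> where pf: "prenex_form True \<psi> p \<phi>"
    using ex_prenex_form[OF assms] by blast
  have "alt_depth (prefixed p \<phi>) \<le> alts (Some True) (prefixed p \<phi>)"
    unfolding alt_depth_def by (rule alts_None_le)
  also have "\<dots> \<le> alts (Some True) \<psi>"
    using pf by (simp add: prenex_form_def alts_prefixed)
  also have "\<dots> \<le> alt_depth \<psi> + 1"
    unfolding alt_depth_def by (rule alts_Some_le)
  finally show ?thesis
    using pf prenex_prefixed by (auto simp: prenex_form_def valid_asg_def)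
qed

end
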